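(* Let $q\in\mathbb N$, $N>q$, $\theta\in[0,1]$ and $\alpha>1$. Let $\mathbb X=\{x\subseteq\mathbb N: x \text{ finite}, |x|>q\}$ and $\mathbb Y$ the set of size-$q$ subsets of elements of $\mathbb X$. There exist datasets $x\simeq_\Delta x'$ of size $N$ and a function $h:\mathbb Y\to\{0,1\}$ such that the subsampled randomized response mechanism $M=B\circ S$ ($S$ subsampling without replacement with batch size $q$, $B(y)=|h(y)-(1-V)|$, $V\sim\mathrm{Bern}(\theta)$) satisfies $$\Lambda_\alpha(m_x\|m_{x'})=\max_{\tau\in\{\theta,1-\theta\}}\Lambda_\alpha\big((1-w)\mathrm{Bern}(\cdot\mid\theta)+w\,\mathrm{Bern}(\cdot\mid\tau)\ \big\|\ (1-w)\mathrm{Bern}(\cdot\mid\theta)+w\,\mathrm{Bern}(\cdot\mid1-\tau)\big),\quad w=q/N.$$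
   Context: Subsampling without replacement: $s_x(y)=\binom{|x|}{q}^{-1}$ for $y\subseteq x$, $|y|=q$. $b_y$ is the pmf of $B(y)$ on $\{0,1\}$ and $m_x=\sum_y b_y s_x(y)$. $\mathrm{Bern}(\cdot\mid p)$ is the pmf on $\{0,1\}$ with mass $p$ at $1$. $x\simeq_\Delta x'$ iff $x'=(x\setminus\{a\})\cup\{a'\}$ with $a\in x$, $a'\notin x$. $\Lambda_\alpha(p\|q)=\sum_{z\in\{0,1\}}p(z)^\alpha q(z)^{1-\alpha}$. *)

theory Defs
  imports Complex_Main "HOL-Library.Extended_Real"
begin

text \<open>Probability mass functions on {0,1} are represented as functions nat => real
  (only the values at 0 and 1 matter).\<close>

definition bern :: "real \<Rightarrow> nat \<Rightarrow> real" where
  "bern p z = (if z = 1 then p else if z = 0 then 1 - p else 0)"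

definition Lambda_term :: "real \<Rightarrow> real \<Rightarrow> real \<Rightarrow> ereal" where
  "Lambda_term \<alpha> a b =
     (if b = 0 then (if a = 0 then 0 else \<infinity>) else ereal (a powr \<alpha> * b powr (1 - \<alpha>)))"

definition Lambda :: "real \<Rightarrow> (nat \<Rightarrow> real) \<Rightarrow> (nat \<Rightarrow> real) \<Rightarrow> ereal" where
  "Lambda \<alpha> p q = (\<Sum>z\<in>{0,1::nat}. Lambda_term \<alpha> (p z) (q z))"

definition subsample :: "nat \<Rightarrow> nat set \<Rightarrow> nat set \<Rightarrow> real" where
  "subsample q x y = (if y \<subseteq> x \<and> card y = q then 1 / real (card x choose q) else 0)"

definition rr_pmf :: "real \<Rightarrow> (nat set \<Rightarrow> nat) \<Rightarrow> nat set \<Rightarrow> nat \<Rightarrow> real" where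
  "rr_pmf \<theta> h y z =
     (\<Sum>v\<in>{0,1::nat}. bern \<theta> v *
        (if \<bar>int (h y) - (1 - int v)\<bar> = int z then 1 else 0))"

definition mech_pmf :: "nat \<Rightarrow> real \<Rightarrow> (nat set \<Rightarrow> nat) \<Rightarrow> nat set \<Rightarrow> nat \<Rightarrow> real" where
  "mech_pmf q \<theta> h x z = (\<Sum>y\<in>{y. y \<subseteq> x \<and> card y = q}. rr_pmf \<theta> h y z * subsample q x y)"

definition subst_nbr :: "nat set \<Rightarrow> nat set \<Rightarrow> bool" where
  "subst_nbr x x' \<longleftrightarrow> (\<exists>a a'. a \<in> x \<and> a' \<notin> x \<and> x' = (x - {a}) \<union> {a'})"

definition mix :: "real \<Rightarrow> (nat \<Rightarrow> real) \<Rightarrow> (nat \<Rightarrow> real) \<Rightarrow> nat \<Rightarrow> real" where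
  "mix w p1 p2 z = (1 - w) * p1 z + w * p2 z"

end

theory Submission
  imports Defs
begin

text \<open>Take x = {0..<N}, x' = {1..N} and let h y = 0 exactly when y contains a fixed element a.
  Subsampling from a dataset that misses a always yields h = 1, so the output is Bern(theta);
  from a dataset containing a, the batch contains a with probability q/N, so the output is the
  mixture (1 - w) Bern(theta) + w Bern(1 - theta). Choosing a = 0 or a = N yields the two
  orderings of this pair, which are exactly the two candidates tau = 1 - theta and tau = theta
  of the maximum; pick the one attaining it.\<close>

definition absent_indicator :: "nat \<Rightarrow> nat set \<Rightarrow> nat" where
  "absent_indicator a y = (if a \<in> y then 0 else 1)"

lemma rr_pmf_absent_indicator:
  "rr_pmf \<theta> (absent_indicator a) y z = (if a \<in> y then bern (1 - \<theta>) z else bern \<theta> z)"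
  by (auto simp: rr_pmf_def bern_def absent_indicator_def)

lemma mix_same [simp]: "mix w p p = p"
  by (rule ext) (simp add: mix_def algebra_simps)

lemma card_subsets_avoiding:
  assumes "finite x" and "a \<in> x"
  shows "card {y. y \<subseteq> x \<and> card y = q \<and> a \<notin> y} = (card x - 1) choose q"
proof -
  have "{y. y \<subseteq> x \<and> card y = q \<and> a \<notin> y} = {y. y \<subseteq> x - {a} \<and> card y = q}"
    by auto
  then show ?thesis
    using n_subsets[of "x - {a}" q] assms by simp
qed

lemma mech_pmf_eq_average:
  assumes "finite x"
  shows "mech_pmf q \<theta> h x z =
    (\<Sum>y\<in>{y. y \<subseteq> x \<and> card y = q}. rr_pmf \<theta> h y z) / real (card x choose q)"
  unfolding mech_pmf_def sum_divide_distrib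
  by (rule sum.cong) (auto simp: subsample_def)

lemma mech_pmf_absent_indicator_nonmember:
  assumes "finite x" and "a \<notin> x" and "q \<le> card x"
  shows "mech_pmf q \<theta> (absent_indicator a) x = bern \<theta>"
proof (rule ext)
  fix z
  have "mech_pmf q \<theta> (absent_indicator a) x z =
      real (card {y. y \<subseteq> x \<and> card y = q}) * bern \<theta> z / real (card x choose q)"
    using assms(2) unfolding mech_pmf_eq_average[OF assms(1)] rr_pmf_absent_indicator
    by (subst sum.cong[OF refl, of _ _ "\<lambda>_. bern \<theta> z"]) auto
  also have "\<dots> = bern \<theta> z"
    using n_subsets[OF assms(1)] assms(3) by simp
  finally show "mech_pmf q \<theta> (absent_indicator a) x z = bern \<theta> z" .
qed

lemma mech_pmf_absent_indicator_member:
  assumes "finite x" and "a \<in> x" and "q \<le> card x"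
  shows "mech_pmf q \<theta> (absent_indicator a) x =
    mix (real q / real (card x)) (bern \<theta>) (bern (1 - \<theta>))"
proof (rule ext)
  fix z
  define N where "N = card x"
  define S where "S = {y. y \<subseteq> x \<and> card y = q}"
  define C where "C = N choose q"
  define A where "A = (N - 1) choose q"
  have "finite S"
    unfolding S_def using assms(1) by simp
  have card_S: "card S = C"
    unfolding S_def C_def N_def using n_subsets[OF assms(1)] by simp
  have card_avoid: "card {y \<in> S. a \<notin> y} = A"
    unfolding S_def A_def N_def using card_subsets_avoiding[OF assms(1,2)] by simp
  have card_hit: "card {y \<in> S. a \<in> y} = C - A"
    using card_S card_avoid card_Int_Diff[OF \<open>finite S\<close>, of "{y. a \<in> y}"]
    by (simp add: Int_def set_diff_eq)
  have "A \<le> C"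
    using card_S card_avoid card_mono[OF \<open>finite S\<close>, of "{y \<in> S. a \<notin> y}"] by auto
  have "N > 0" "C > 0"
    using assms unfolding N_def C_def by (auto simp: card_gt_0_iff)
  \<comment> \<open>absorption identity: the q-subsets avoiding a make up a fraction 1 - q/N\<close>
  have "real (N - q) * real C = real N * real A"
    using binomial_absorb_comp[of N q] unfolding C_def A_def
    by (metis of_nat_mult)
  then have avoid_ratio: "real A / real C = 1 - real q / real N"
    using \<open>N > 0\<close> \<open>C > 0\<close> assms(3) by (simp add: N_def field_simps of_nat_diff)
  have "mech_pmf q \<theta> (absent_indicator a) x z =
      (real (C - A) * bern (1 - \<theta>) z + real A * bern \<theta> z) / real C"
    unfolding mech_pmf_eq_average[OF assms(1)] rr_pmf_absent_indicator
      S_def[symmetric] N_def[symmetric] C_def[symmetric]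
    using sum.If_cases[OF \<open>finite S\<close>, of "\<lambda>y. a \<in> y" "\<lambda>_. bern (1 - \<theta>) z" "\<lambda>_. bern \<theta> z"]
      card_hit card_avoid
    by (simp add: Int_def set_diff_eq)
  also have "\<dots> = real (C - A) / real C * bern (1 - \<theta>) z + real A / real C * bern \<theta> z"
    by (simp add: add_divide_distrib)
  also have "\<dots> = real q / real N * bern (1 - \<theta>) z + (1 - real q / real N) * bern \<theta> z"
    using avoid_ratio \<open>A \<le> C\<close> \<open>C > 0\<close> by (simp add: of_nat_diff diff_divide_distrib)
  finally show "mech_pmf q \<theta> (absent_indicator a) x z =
      mix (real q / real (card x)) (bern \<theta>) (bern (1 - \<theta>)) z"
    by (simp add: mix_def N_def)
qed

theorem mainTheorem14:
  fixes q N :: nat and \<theta> \<alpha> :: real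
  assumes "N > q" and "0 \<le> \<theta>" and "\<theta> \<le> 1" and "\<alpha> > 1"
  shows "\<exists>(x::nat set) (x'::nat set) (h::nat set \<Rightarrow> nat).
           finite x \<and> card x = N \<and> finite x' \<and> card x' = N \<and> subst_nbr x x' \<and>
           (\<forall>y. h y \<in> {0, 1}) \<and>
           Lambda \<alpha> (mech_pmf q \<theta> h x) (mech_pmf q \<theta> h x') =
             Max ((\<lambda>\<tau>. Lambda \<alpha> (mix (real q / real N) (bern \<theta>) (bern \<tau>))
                                  (mix (real q / real N) (bern \<theta>) (bern (1 - \<tau>)))) ` {\<theta>, 1 - \<theta>})"
proof -
  define M where "M = mix (real q / real N) (bern \<theta>) (bern (1 - \<theta>))"
  define x where "x = {0..<N}"
  define x' where "x' = {1..N}"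
  have sizes: "finite x" "card x = N" "finite x'" "card x' = N"
    unfolding x_def x'_def by auto
  have "0 \<in> x" "N \<notin> x" "x' = (x - {0}) \<union> {N}" "0 \<notin> x'" "N \<in> x'"
    using assms(1) unfolding x_def x'_def by auto
  then have "subst_nbr x x'"
    unfolding subst_nbr_def by blast
  have indicator_01: "\<forall>y. absent_indicator a y \<in> {0, 1}" for a
    by (simp add: absent_indicator_def)
  have "q \<le> N" using assms(1) by simp
  then have Lambda_0: "Lambda \<alpha> (mech_pmf q \<theta> (absent_indicator 0) x)
                               (mech_pmf q \<theta> (absent_indicator 0) x') = Lambda \<alpha> M (bern \<theta>)"
    and Lambda_N: "Lambda \<alpha> (mech_pmf q \<theta> (absent_indicator N) x)
                               (mech_pmf q \<theta> (absent_indicator N) x') = Lambda \<alpha> (bern \<theta>) M"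
    using mech_pmf_absent_indicator_member mech_pmf_absent_indicator_nonmember
      \<open>0 \<in> x\<close> \<open>N \<notin> x\<close> \<open>0 \<notin> x'\<close> \<open>N \<in> x'\<close> sizes
    unfolding M_def by simp_all
  have "Max ((\<lambda>\<tau>. Lambda \<alpha> (mix (real q / real N) (bern \<theta>) (bern \<tau>))
                            (mix (real q / real N) (bern \<theta>) (bern (1 - \<tau>)))) ` {\<theta>, 1 - \<theta>})
        = max (Lambda \<alpha> (bern \<theta>) M) (Lambda \<alpha> M (bern \<theta>))"
    by (simp add: M_def)
  then show ?thesis
    using sizes \<open>subst_nbr x x'\<close> indicator_01 Lambda_0 Lambda_N
    by (cases "Lambda \<alpha> (bern \<theta>) M \<le> Lambda \<alpha> M (bern \<theta>)"; simp only: max_def if_True if_False)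
      blast+
qed

end
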